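(* Let $\beta>0$, $n\in\mathbb{N}$ (a nonnegative integer), $f\in H(\mathbb{D})$, and for $w\in\mathbb{D}$ let $F_w(z)=\dfrac{f(z)}{(1-\overline{w}z)^{\beta+n}}$. Then for every $w\in\mathbb{D}$, $$(1-|w|^2)^{n+1}\left(F_w^{(n+1)}(w)-\frac{f^{(n+1)}(w)}{(1-|w|^2)^{\beta+n}}\right)+\sum_{i=0}^{n}(-1)^{i+1}\binom{n+1}{i+1}\Gamma_\beta^{n-i,n}\,\overline{w}^{\,i+1}F_w^{(n-i)}(w)(1-|w|^2)^{n-i}=0,$$ where for integers $0\leq a\leq b$, $\Gamma_\beta^{a,b}=\prod_{j=a}^{b}(\beta+j)$.
   Context: $\mathbb{D}$ is the open unit disc and $H(\mathbb{D})$ the space of analytic functions on $\mathbb{D}$; $F_w^{(m)}$ denotes the $m$-th derivative of $F_w$ in $z$. *)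

theory Defs
  imports "HOL-Complex_Analysis.Complex_Analysis"
begin

definition Gamma_beta :: "real \<Rightarrow> nat \<Rightarrow> nat \<Rightarrow> real" where
  "Gamma_beta \<beta> a b = (\<Prod>j\<in>{a..b}. \<beta> + real j)"

text \<open>F_w(z) = f(z) / (1 - conj(w) z)^(beta+n), principal branch (Re(1 - conj w z) > 0 on the disc).\<close>
definition F_w :: "(complex \<Rightarrow> complex) \<Rightarrow> real \<Rightarrow> nat \<Rightarrow> complex \<Rightarrow> complex \<Rightarrow> complex" where
  "F_w f \<beta> n w z = f z / (1 - cnj w * z) powr complex_of_real (\<beta> + real n)"

end

theory Submission
  imports Defs
begin

(*
  Write f = h * F_w with h z = (1 - conj w * z) powr (beta + n).  The Leibniz rule gives
  f^(n+1)(w) = sum_k C(n+1,k) h^(k)(w) F_w^(n+1-k)(w), and the derivatives of h are explicit: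
  h^(k)(w) = (- conj w)^k (beta+n)(beta+n-1)...(beta+n-k+1) (1 - |w|^2) powr (beta+n-k),
  the falling product being Gamma_beta^(n-k+1,n).  After dividing by h(w) = (1 - |w|^2) powr (beta+n)
  and multiplying by (1 - |w|^2)^(n+1), the term k = 0 is (1 - |w|^2)^(n+1) F_w^(n+1)(w) and the
  remaining terms are the sum in the identity.
*)

lemma higher_deriv_powr:
  fixes z s :: complex
  assumes "z \<notin> \<real>\<^sub>\<le>\<^sub>0"
  shows "(deriv ^^ k) (\<lambda>z. z powr s) z = (\<Prod>j<k. s - of_nat j) * z powr (s - of_nat k)"
  using assms
proof (induction k arbitrary: z)
  case 0
  then show ?case by simp
next
  case (Suc k)
  have "eventually (\<lambda>x. x \<in> - \<real>\<^sub>\<le>\<^sub>0) (nhds z)"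
    using Suc.prems by (intro eventually_nhds_in_open) auto
  then have "eventually (\<lambda>x. (deriv ^^ k) (\<lambda>z. z powr s) x
               = (\<Prod>j<k. s - of_nat j) * x powr (s - of_nat k)) (nhds z)"
    by (rule eventually_mono) (use Suc.IH in auto)
  then have "(deriv ^^ Suc k) (\<lambda>z. z powr s) z
               = deriv (\<lambda>x. (\<Prod>j<k. s - of_nat j) * x powr (s - of_nat k)) z"
    using deriv_cong_ev by force
  also have "\<dots> = (\<Prod>j<k. s - of_nat j) * ((s - of_nat k) * z powr (s - of_nat k - 1))"
    by (intro DERIV_imp_deriv DERIV_cmult has_field_derivative_powr Suc.prems)
  also have "\<dots> = (\<Prod>j<Suc k. s - of_nat j) * z powr (s - of_nat (Suc k))"
    by (simp add: algebra_simps diff_diff_eq)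
  finally show ?case .
qed

lemma Re_one_minus_cnj_mult_pos:
  assumes "cmod w < 1" "cmod z < 1"
  shows "Re (1 - cnj w * z) > 0"
proof -
  have "Re (cnj w * z) \<le> cmod w * cmod z"
    using complex_Re_le_cmod[of "cnj w * z"] by (simp add: norm_mult)
  also have "\<dots> < 1"
    using assms by (metis mult_strict_mono' norm_ge_zero mult_1_right)
  finally show ?thesis by simp
qed

lemma one_minus_cnj_mult_notin_nonpos_Reals:
  assumes "cmod w < 1" "z \<in> ball 0 1"
  shows "1 - cnj w * z \<notin> \<real>\<^sub>\<le>\<^sub>0"
  using Re_one_minus_cnj_mult_pos[of w z] assms by (auto simp: complex_nonpos_Reals_iff)

lemma higher_deriv_one_minus_cnj_mult_powr:
  assumes "cmod w < 1" "z \<in> ball 0 1"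
  shows "(deriv ^^ k) (\<lambda>z. (1 - cnj w * z) powr s) z
           = (- cnj w) ^ k * (\<Prod>j<k. s - of_nat j) * (1 - cnj w * z) powr (s - of_nat k)"
proof -
  have "(deriv ^^ k) (\<lambda>z. (1 - cnj w * z) powr s) z = (deriv ^^ k) (\<lambda>z. ((- cnj w) * z + 1) powr s) z"
    by (simp add: add.commute)
  also have "\<dots> = (- cnj w) ^ k * (deriv ^^ k) (\<lambda>z. z powr s) ((- cnj w) * z + 1)"
  proof (rule higher_deriv_compose_linear'[where S = "ball 0 1"])
    show "(\<lambda>z. z powr s) holomorphic_on - \<real>\<^sub>\<le>\<^sub>0"
      by (intro holomorphic_intros) auto
  qed (use assms one_minus_cnj_mult_notin_nonpos_Reals in auto)
  also have "\<dots> = (- cnj w) ^ k * (\<Prod>j<k. s - of_nat j) * (1 - cnj w * z) powr (s - of_nat k)"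
    using higher_deriv_powr one_minus_cnj_mult_notin_nonpos_Reals[OF assms] by (simp add: add.commute)
  finally show ?thesis .
qed

lemma one_minus_cnj_mult_self: "1 - cnj w * w = complex_of_real (1 - (cmod w)\<^sup>2)"
  by (metis complex_norm_square mult.commute of_real_1 of_real_diff)

lemma holomorphic_on_F_w:
  assumes "f holomorphic_on ball 0 1" "cmod w < 1"
  shows "F_w f \<beta> n w holomorphic_on ball 0 1"
  unfolding F_w_def using assms one_minus_cnj_mult_notin_nonpos_Reals[of w] Re_one_minus_cnj_mult_pos[of w]
  by (intro holomorphic_intros) force+

lemma scaled_higher_deriv_eq_sum_higher_deriv_F_w:
  assumes "f holomorphic_on ball 0 1" "w \<in> ball 0 1"
  defines "a \<equiv> 1 - (cmod w)\<^sup>2"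
  shows "complex_of_real (a ^ m) * (deriv ^^ m) f w / complex_of_real (a powr (\<beta> + real n))
    = (\<Sum>k = 0..m. of_nat (m choose k) * (- cnj w) ^ k
         * complex_of_real (\<Prod>j<k. \<beta> + real n - real j)
         * (deriv ^^ (m - k)) (F_w f \<beta> n w) w * complex_of_real (a ^ (m - k)))"
proof -
  define t where "t = \<beta> + real n"
  define h where "h = (\<lambda>z. (1 - cnj w * z) powr complex_of_real t)"
  define F where "F = F_w f \<beta> n w"
  have w: "cmod w < 1" using assms(2) by simp
  have a_pos: "a > 0"
    unfolding a_def using w by (simp add: abs_square_less_1)
  have h_holo: "h holomorphic_on ball 0 1"
    unfolding h_def using one_minus_cnj_mult_notin_nonpos_Reals[OF w]
    by (intro holomorphic_intros) auto
  have F_holo: "F holomorphic_on ball 0 1"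
    unfolding F_def using holomorphic_on_F_w[OF assms(1) w] .
  have f_eq: "f z = h z * F z" if "z \<in> ball 0 1" for z
    using one_minus_cnj_mult_notin_nonpos_Reals[OF w that]
    unfolding h_def F_def F_w_def t_def by auto
  have h_deriv: "(deriv ^^ k) h w
      = (- cnj w) ^ k * complex_of_real (\<Prod>j<k. t - real j) * complex_of_real (a powr (t - real k))"
    for k
  proof -
    have "(deriv ^^ k) h w = (- cnj w) ^ k * (\<Prod>j<k. complex_of_real t - of_nat j)
        * complex_of_real a powr (complex_of_real t - of_nat k)"
      unfolding h_def a_def one_minus_cnj_mult_self[symmetric]
      by (rule higher_deriv_one_minus_cnj_mult_powr[OF w assms(2)])
    also have "complex_of_real a powr (complex_of_real t - of_nat k) = complex_of_real (a powr (t - real k))"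
      using a_pos powr_of_real[of a "t - real k"] by simp
    finally show ?thesis by simp
  qed
  have "(deriv ^^ m) f w = (deriv ^^ m) (\<lambda>z. h z * F z) w"
    by (rule higher_deriv_transform_within_open[OF assms(1) holomorphic_on_mult[OF h_holo F_holo]
          open_ball assms(2) f_eq])
  also have "\<dots> = (\<Sum>k = 0..m. of_nat (m choose k) * (deriv ^^ k) h w * (deriv ^^ (m - k)) F w)"
    using higher_deriv_mult[OF h_holo F_holo open_ball assms(2)] .
  finally have "complex_of_real (a ^ m) * (deriv ^^ m) f w / complex_of_real (a powr t)
      = (\<Sum>k = 0..m. complex_of_real (a ^ m) * (of_nat (m choose k) * (deriv ^^ k) h w
           * (deriv ^^ (m - k)) F w) / complex_of_real (a powr t))"
    by (simp add: sum_distrib_left sum_divide_distrib)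
  also have "\<dots> = (\<Sum>k = 0..m. of_nat (m choose k) * (- cnj w) ^ k * complex_of_real (\<Prod>j<k. t - real j)
           * (deriv ^^ (m - k)) F w * complex_of_real (a ^ (m - k)))"
  proof (intro sum.cong refl)
    fix k assume "k \<in> {0..m}"
    then have "a ^ m * a powr (t - real k) / a powr t = a ^ (m - k)"
      using a_pos by (simp add: powr_diff powr_realpow power_diff)
    then have scale: "complex_of_real (a ^ m) * complex_of_real (a powr (t - real k))
        / complex_of_real (a powr t) = complex_of_real (a ^ (m - k))"
      by (metis of_real_mult of_real_divide)
    then show "complex_of_real (a ^ m) * (of_nat (m choose k) * (deriv ^^ k) h w
           * (deriv ^^ (m - k)) F w) / complex_of_real (a powr t)
        = of_nat (m choose k) * (- cnj w) ^ k * complex_of_real (\<Prod>j<k. t - real j)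
           * (deriv ^^ (m - k)) F w * complex_of_real (a ^ (m - k))"
      unfolding h_deriv scale[symmetric] using a_pos by (simp add: field_simps)
  qed
  finally show ?thesis
    unfolding t_def F_def .
qed

lemma Gamma_beta_eq_falling_prod:
  "i \<le> n \<Longrightarrow> Gamma_beta \<beta> (n - i) n = (\<Prod>j<Suc i. \<beta> + real n - real j)"
proof (induction i)
  case 0
  then show ?case by (simp add: Gamma_beta_def)
next
  case (Suc i)
  have "{n - Suc i..n} = insert (n - Suc i) {n - i..n}" using Suc.prems by auto
  then have "Gamma_beta \<beta> (n - Suc i) n = (\<beta> + real (n - Suc i)) * Gamma_beta \<beta> (n - i) n"
    unfolding Gamma_beta_def using Suc.prems by simp
  also have "\<dots> = (\<beta> + real n - real (Suc i)) * (\<Prod>j<Suc i. \<beta> + real n - real j)"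
    using Suc by (simp add: of_nat_diff)
  finally show ?case by (simp add: mult.commute)
qed

theorem lemma2p7:
  fixes f :: "complex \<Rightarrow> complex" and \<beta> :: real and n :: nat and w :: complex
  assumes "\<beta> > 0"
    and "f holomorphic_on ball 0 1"
    and "w \<in> ball 0 1"
  shows "complex_of_real ((1 - (cmod w)\<^sup>2) ^ (n + 1)) *
           ((deriv ^^ (n + 1)) (F_w f \<beta> n w) w
             - (deriv ^^ (n + 1)) f w / complex_of_real ((1 - (cmod w)\<^sup>2) powr (\<beta> + real n)))
         + (\<Sum>i = 0..n. (-1) ^ (i + 1) * of_nat ((n + 1) choose (i + 1))
              * complex_of_real (Gamma_beta \<beta> (n - i) n) * (cnj w) ^ (i + 1)
              * (deriv ^^ (n - i)) (F_w f \<beta> n w) w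
              * complex_of_real ((1 - (cmod w)\<^sup>2) ^ (n - i))) = 0"
proof -
  \<comment> \<open>The identity holds for every real \<open>\<beta>\<close>.\<close>
  define a where "a = 1 - (cmod w)\<^sup>2"
  define G where "G = (\<lambda>k. (deriv ^^ k) (F_w f \<beta> n w) w)"
  define S where "S = (\<Sum>i = 0..n. (-1) ^ (i + 1) * of_nat ((n + 1) choose (i + 1))
    * complex_of_real (Gamma_beta \<beta> (n - i) n) * (cnj w) ^ (i + 1) * G (n - i)
    * complex_of_real (a ^ (n - i)))"
  have "complex_of_real (a ^ Suc n) * (deriv ^^ Suc n) f w / complex_of_real (a powr (\<beta> + real n))
      = (\<Sum>k = 0..Suc n. of_nat (Suc n choose k) * (- cnj w) ^ k
          * complex_of_real (\<Prod>j<k. \<beta> + real n - real j) * G (Suc n - k) * complex_of_real (a ^ (Suc n - k)))"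
    unfolding a_def G_def by (rule scaled_higher_deriv_eq_sum_higher_deriv_F_w[OF assms(2,3)])
  also have "\<dots> = G (Suc n) * complex_of_real (a ^ Suc n) + S"
    unfolding S_def sum.atLeast0_atMost_Suc_shift
    by (intro arg_cong2[where f = "(+)"] sum.cong)
       (simp_all add: Gamma_beta_eq_falling_prod power_minus[of "cnj w"] mult_ac)
  finally have "complex_of_real (a ^ (n + 1)) * (G (n + 1)
      - (deriv ^^ (n + 1)) f w / complex_of_real (a powr (\<beta> + real n))) + S = 0"
    by (simp add: right_diff_distrib)
  then show ?thesis
    unfolding a_def G_def S_def .
qed

end
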